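(* Let $(H,\lambda)$ be a friendly pair such that no row of $H$ is zero or a multiple of another row, and fix any $u\in\mathbb{R}^{n+1}_{>0}$. Then $(H,\lambda)$ is a Horn pair if and only if $\lambda_i(Hu)^{h_i}>0$ for $i=0,1,\dots,n$. If this holds, then the nonzero entries in each row of $H$ have the same sign; in particular the sign vector $\sigma=\mathrm{sign}(Hu)$ is independent of the choice of $u\in\mathbb{R}^{n+1}_{>0}$.
   Context: A Horn matrix is an $m\times(n+1)$ integer matrix $H=(h_{ij})$ whose columns $h_0,\dots,h_n$ sum to zero; write $(Hu)^{h_i}=\prod_{j=1}^m(\sum_k h_{jk}u_k)^{h_{ji}}$. $(H,\lambda)$ is a friendly pair if $\lambda\in\mathbb{R}^{n+1}$ has nonzero entries and $\sum_{i=0}^n\lambda_i(Hu)^{h_i}=1$ identically in $\mathbb{R}(u_0,\dots,u_n)$. A friendly pair is a Horn pair if no row of $H$ is zero or a multiple of another row, and the rational map $u\mapsto(\lambda_0(Hu)^{h_0},\dots,\lambda_n(Hu)^{h_n})$ is defined for all positive vectors and maps them to positive vectors. *)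

theory Defs
  imports Complex_Main
begin

text \<open>An m x (n+1) integer matrix H is represented as H :: nat => nat => int,
  with rows j < m and columns k \<le> n (indices 0..n). Vectors u, lambda : nat => real,
  components 0..n.\<close>

definition linform :: "(nat \<Rightarrow> nat \<Rightarrow> int) \<Rightarrow> nat \<Rightarrow> (nat \<Rightarrow> real) \<Rightarrow> nat \<Rightarrow> real" where
  "linform H n u j = (\<Sum>k\<le>n. real_of_int (H j k) * u k)"

definition hmono :: "(nat \<Rightarrow> nat \<Rightarrow> int) \<Rightarrow> nat \<Rightarrow> nat \<Rightarrow> (nat \<Rightarrow> real) \<Rightarrow> nat \<Rightarrow> real" where
  "hmono H m n u i = (\<Prod>j<m. (linform H n u j) powi (H j i))"

definition horn_matrix :: "(nat \<Rightarrow> nat \<Rightarrow> int) \<Rightarrow> nat \<Rightarrow> nat \<Rightarrow> bool" where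
  "horn_matrix H m n \<longleftrightarrow> (\<forall>i\<le>n. (\<Sum>j<m. H j i) = 0)"

text \<open>Identity of rational functions in R(u_0..u_n), expressed as equality at every point
  where all (not identically zero) linear forms (Hu)_j are nonzero (a Zariski-dense set).\<close>
definition friendly_pair :: "(nat \<Rightarrow> nat \<Rightarrow> int) \<Rightarrow> nat \<Rightarrow> nat \<Rightarrow> (nat \<Rightarrow> real) \<Rightarrow> bool" where
  "friendly_pair H m n lam \<longleftrightarrow> horn_matrix H m n \<and> (\<forall>i\<le>n. lam i \<noteq> 0) \<and>
     (\<forall>u. (\<forall>j<m. (\<exists>k\<le>n. H j k \<noteq> 0) \<longrightarrow> linform H n u j \<noteq> 0) \<longrightarrow>
          (\<Sum>i\<le>n. lam i * hmono H m n u i) = 1)"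

definition rows_nondegenerate :: "(nat \<Rightarrow> nat \<Rightarrow> int) \<Rightarrow> nat \<Rightarrow> nat \<Rightarrow> bool" where
  "rows_nondegenerate H m n \<longleftrightarrow>
     (\<forall>j<m. (\<exists>k\<le>n. H j k \<noteq> 0) \<and>
        (\<forall>j'<m. j' \<noteq> j \<longrightarrow> \<not> (\<exists>c::real. \<forall>k\<le>n. real_of_int (H j k) = c * real_of_int (H j' k))))"

text \<open>The rational map is defined at u iff no factor with negative exponent vanishes
  (the monomial in the pairwise non-proportional linear forms is reduced).\<close>
definition horn_pair :: "(nat \<Rightarrow> nat \<Rightarrow> int) \<Rightarrow> nat \<Rightarrow> nat \<Rightarrow> (nat \<Rightarrow> real) \<Rightarrow> bool" where
  "horn_pair H m n lam \<longleftrightarrow> friendly_pair H m n lam \<and> rows_nondegenerate H m n \<and>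
     (\<forall>u. (\<forall>k\<le>n. u k > 0) \<longrightarrow>
        (\<forall>i\<le>n. \<forall>j<m. H j i < 0 \<longrightarrow> linform H n u j \<noteq> 0) \<and>
        (\<forall>i\<le>n. lam i * hmono H m n u i > 0))"

end

theory Submission
  imports Defs "HOL-Computational_Algebra.Polynomial"
begin

(* If all terms lam_i (Hu)^h_i are positive but some row of H has entries of both signs, pick a
   positive w at which that row's form has the opposite sign, in general position (on a moment
   curve) so that no two forms vanish at the same point of the segment from u to w.  Up to the
   first zero t0 of a form on this segment all forms keep their signs, so all terms stay positive
   and, summing to 1, are at most 1.  Exactly one form (Hx)_j vanishes at t0; as x(t0) is positive,
   row j has a negative entry h_jc, and the c-th term, which contains (Hx)_j^h_jc, blows up at t0.
   So every row has constant sign, whence (Hv)_j has the sign of (Hu)_j for all positive v and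
   the terms at v are positive multiples of the terms at u. *)

lemma filterlim_power_int_neg_at_top:
  fixes f :: "'a \<Rightarrow> real"
  assumes "e < 0" "(f \<longlongrightarrow> 0) F" "\<forall>\<^sub>F x in F. 0 < f x"
  shows "filterlim (\<lambda>x. f x powi e) at_top F"
proof -
  have "filterlim (\<lambda>x. inverse (f x ^ nat (- e))) at_top F"
    by (rule filterlim_inverse_at_top)
       (use assms in \<open>auto intro!: tendsto_eq_intros elim: eventually_mono\<close>)
  then show ?thesis
    using assms(1) by (simp add: power_int_def power_inverse)
qed

lemma first_zero_of_affine_family:
  fixes d :: "nat \<Rightarrow> real"
  assumes "j0 < m" "d j0 < -1" "inj_on d {..<m}"
  obtains j1 ts where "j1 < m" "0 < ts" "ts < 1" "\<And>t. 1 + t * d j1 = 1 - t / ts"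
    and "\<And>j t. j < m \<Longrightarrow> 0 \<le> t \<Longrightarrow> t < ts \<Longrightarrow> 1 + t * d j > 0"
    and "\<And>j. j < m \<Longrightarrow> j \<noteq> j1 \<Longrightarrow> 1 + ts * d j > 0"
proof -
  \<comment> \<open>The first zero belongs to the steepest descent.\<close>
  have "Min (d ` {..<m}) \<in> d ` {..<m}" using assms(1) by (intro Min_in) auto
  then obtain j1 where j1: "j1 < m" "d j1 = Min (d ` {..<m})" by auto
  have min: "d j1 \<le> d j" if "j < m" for j using j1 that by simp
  have neg: "d j1 < -1" using min[OF assms(1)] assms(2) by simp
  define ts where "ts = - 1 / d j1"
  have ts: "0 < ts" "ts < 1" using neg unfolding ts_def by (auto simp: field_simps)
  have first: "1 + t * d j1 = 1 - t / ts" for t using neg unfolding ts_def by (simp add: field_simps)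
  show thesis
  proof (rule that[OF j1(1) ts first])
    fix j t assume "j < m" "0 \<le> t" "t < ts"
    then have "1 + t * d j1 \<le> 1 + t * d j" using min by (simp add: mult_left_mono)
    moreover have "1 - t / ts > 0" using \<open>t < ts\<close> ts by simp
    ultimately show "1 + t * d j > 0" using first by simp
  next
    fix j assume "j < m" "j \<noteq> j1"
    then have "d j1 < d j" using min assms(3) j1(1) by (metis inj_on_def lessThan_iff order_le_neq_trans)
    then have "1 + ts * d j1 < 1 + ts * d j" using ts by simp
    then show "1 + ts * d j > 0" using first[of ts] ts by simp
  qed
qed

lemma prod_affine_powers_tendsto_at_top:
  fixes d :: "nat \<Rightarrow> real" and e :: "nat \<Rightarrow> int"
  assumes "finite A" "j1 \<in> A" "0 < ts" "\<And>t. 1 + t * d j1 = 1 - t / ts" "e j1 < 0"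
    and "\<And>j. j \<in> A \<Longrightarrow> j \<noteq> j1 \<Longrightarrow> 1 + ts * d j > 0"
  shows "filterlim (\<lambda>t. \<Prod>j\<in>A. (1 + t * d j) powi e j) at_top (at_left ts)"
proof -
  define G where "G t = (\<Prod>j\<in>A - {j1}. (1 + t * d j) powi e j)" for t
  have "(G \<longlongrightarrow> G ts) (at_left ts)"
    unfolding G_def using assms(6) by (force intro!: tendsto_eq_intros)
  moreover have "0 < G ts" unfolding G_def using assms(6) by (intro prod_pos) auto
  moreover have "filterlim (\<lambda>t. (1 - t / ts) powi e j1) at_top (at_left ts)"
  proof (rule filterlim_power_int_neg_at_top)
    show "((\<lambda>t. 1 - t / ts) \<longlongrightarrow> 0) (at_left ts)"
      using assms(3) by (auto intro!: tendsto_eq_intros)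
    show "\<forall>\<^sub>F t in at_left ts. 0 < 1 - t / ts"
      by (rule eventually_mono[OF eventually_at_left_real[of 0 ts]]) (use assms(3) in auto)
  qed (use assms(5) in simp)
  ultimately have "filterlim (\<lambda>t. G t * (1 - t / ts) powi e j1) at_top (at_left ts)"
    by (rule filterlim_tendsto_pos_mult_at_top)
  moreover have "(\<Prod>j\<in>A. (1 + t * d j) powi e j) = G t * (1 - t / ts) powi e j1" for t
    unfolding G_def using assms(1,2,4) by (simp add: prod.remove mult.commute)
  ultimately show ?thesis by simp
qed

lemma linform_linear_combination:
  "linform H n (\<lambda>k. x * u k + y * w k) j = x * linform H n u j + y * linform H n w j"
  unfolding linform_def by (simp add: algebra_simps sum.distrib sum_distrib_left)

lemma linform_unit_vector:
  assumes "g \<le> n"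
  shows "linform H n (\<lambda>k. if k = g then 1 else 0) j = real_of_int (H j g)"
  using assms unfolding linform_def by (simp add: if_distrib cong: if_cong)

lemma linform_pos_if_row_nonneg:
  assumes "\<forall>k\<le>n. H j k \<ge> 0" "\<exists>k\<le>n. H j k \<noteq> 0" "\<forall>k\<le>n. v k > 0"
  shows "linform H n v j > 0"
proof -
  obtain k where k: "k \<le> n" "H j k \<noteq> 0" using assms(2) by blast
  show ?thesis unfolding linform_def
    by (rule sum_pos2[of _ k])
       (use assms k in \<open>auto intro!: mult_nonneg_nonneg mult_pos_pos simp: less_le\<close>)
qed

lemma linform_neg_if_row_nonpos:
  assumes "\<forall>k\<le>n. H j k \<le> 0" "\<exists>k\<le>n. H j k \<noteq> 0" "\<forall>k\<le>n. v k > 0"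
  shows "linform H n v j < 0"
proof -
  obtain k where k: "k \<le> n" "H j k \<noteq> 0" using assms(2) by blast
  have "0 < (\<Sum>k\<le>n. - real_of_int (H j k) * v k)"
    by (rule sum_pos2[of _ k])
       (use assms k in \<open>auto intro!: mult_nonpos_nonneg mult_pos_pos simp: less_le\<close>)
  then show ?thesis unfolding linform_def by (simp add: sum_negf)
qed

lemma linform_nonzero_if_terms_pos:
  assumes "rows_nondegenerate H m n" "\<forall>i\<le>n. lam i * hmono H m n u i > 0" "j < m"
  shows "linform H n u j \<noteq> 0"
proof
  assume "linform H n u j = 0"
  from assms(1,3) obtain i where i: "i \<le> n" "H j i \<noteq> 0"
    unfolding rows_nondegenerate_def by blast
  \<comment> \<open>\<open>0 powi e = 0\<close> for every \<open>e \<noteq> 0\<close>, negative exponents included.\<close>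
  have "hmono H m n u i = 0" unfolding hmono_def
    by (rule prod_zero) (use assms(3) \<open>linform H n u j = 0\<close> i in auto)
  then show False using assms(2) i by auto
qed

lemma hmono_ratio:
  assumes "\<forall>j<m. linform H n u j \<noteq> 0"
  shows "hmono H m n v i = hmono H m n u i *
     (\<Prod>j<m. (linform H n v j / linform H n u j) powi H j i)"
  unfolding hmono_def prod.distrib[symmetric] power_int_mult_distrib[symmetric]
  by (rule prod.cong) (use assms in auto)

lemma terms_pos_if_linform_ratios_pos:
  assumes "\<forall>j<m. linform H n u j \<noteq> 0" "\<forall>i\<le>n. lam i * hmono H m n u i > 0"
    and "\<forall>j<m. linform H n v j / linform H n u j > 0"
  shows "\<forall>i\<le>n. lam i * hmono H m n v i > 0"
proof (intro allI impI)
  fix i assume "i \<le> n"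
  have "0 < (\<Prod>j<m. (linform H n v j / linform H n u j) powi H j i)"
    using assms(3) by (intro prod_pos) auto
  then show "lam i * hmono H m n v i > 0"
    unfolding hmono_ratio[OF assms(1), of v i] using assms(2) \<open>i \<le> n\<close>
    by (simp add: mult.assoc[symmetric])
qed

lemma friendly_term_le_one:
  assumes "friendly_pair H m n lam" "\<forall>j<m. linform H n v j \<noteq> 0"
    and "\<forall>i\<le>n. lam i * hmono H m n v i > 0" "c \<le> n"
  shows "lam c * hmono H m n v c \<le> 1"
proof -
  have "(\<Sum>i\<le>n. lam i * hmono H m n v i) = 1"
    using assms(1,2) unfolding friendly_pair_def by blast
  moreover have "lam c * hmono H m n v c \<le> (\<Sum>i\<le>n. lam i * hmono H m n v i)"
    by (rule member_le_sum) (use assms(3,4) in \<open>auto intro: less_imp_le\<close>)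
  ultimately show ?thesis by simp
qed

text \<open>No two of the forms have a common nonzero root in the plane spanned by \<open>u\<close> and \<open>w\<close>.\<close>
definition segment_generic ::
    "(nat \<Rightarrow> nat \<Rightarrow> int) \<Rightarrow> nat \<Rightarrow> nat \<Rightarrow> (nat \<Rightarrow> real) \<Rightarrow> (nat \<Rightarrow> real) \<Rightarrow> bool" where
  "segment_generic H m n u w \<longleftrightarrow> (\<forall>j<m. \<forall>k<m. j \<noteq> k \<longrightarrow>
     linform H n u j * linform H n w k \<noteq> linform H n u k * linform H n w j)"

lemma no_sign_change_towards_generic_point:
  assumes fr: "friendly_pair H m n lam" and nd: "rows_nondegenerate H m n"
    and up: "\<forall>k\<le>n. u k > 0" and pos: "\<forall>i\<le>n. lam i * hmono H m n u i > 0"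
    and wp: "\<forall>k\<le>n. w k > 0" and gen: "segment_generic H m n u w"
    and j0: "j0 < m" and change: "linform H n u j0 * linform H n w j0 < 0"
  shows False
proof -
  define a where "a j = linform H n u j" for j
  define d where "d j = linform H n w j / a j - 1" for j
  define x where "x t = (\<lambda>k. (1 - t) * u k + t * w k)" for t :: real
  have a_nz: "\<forall>j<m. a j \<noteq> 0"
    using linform_nonzero_if_terms_pos[OF nd pos] unfolding a_def by blast
  have linform_x: "linform H n (x t) j = a j * (1 + t * d j)" if "j < m" for j t
    using a_nz that unfolding x_def d_def a_def linform_linear_combination
    by (simp add: field_simps)
  have "inj_on d {..<m}"
  proof (rule inj_onI)
    fix j k assume "j \<in> {..<m}" "k \<in> {..<m}" "d j = d k"
    then show "j = k" using gen a_nz unfolding segment_generic_def d_def a_def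
      by (auto simp: field_simps)
  qed
  moreover have "d j0 < -1"
    using change unfolding d_def a_def by (auto simp: divide_less_0_iff mult_less_0_iff)
  ultimately obtain j1 ts where j1: "j1 < m" and ts: "0 < ts" "ts < 1"
    and first: "\<And>t. 1 + t * d j1 = 1 - t / ts"
    and before: "\<And>j t. j < m \<Longrightarrow> 0 \<le> t \<Longrightarrow> t < ts \<Longrightarrow> 1 + t * d j > 0"
    and at: "\<And>j. j < m \<Longrightarrow> j \<noteq> j1 \<Longrightarrow> 1 + ts * d j > 0"
    using first_zero_of_affine_family[OF j0] by blast
  have "\<forall>k\<le>n. x ts k > 0" using up wp ts unfolding x_def by (simp add: add_pos_pos)
  moreover have "linform H n (x ts) j1 = 0" using linform_x[OF j1] first[of ts] ts by simp
  ultimately obtain c where c: "c \<le> n" "H j1 c < 0"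
    using linform_pos_if_row_nonneg[of n H j1] nd j1 unfolding rows_nondegenerate_def
    by (metis less_irrefl not_le)
  define K where "K = lam c * hmono H m n u c"
  have ratio_x: "linform H n (x t) j / linform H n u j = 1 + t * d j" if "j < m" for j t
    using linform_x[OF that] a_nz that unfolding a_def by simp
  have term_c: "lam c * hmono H m n (x t) c = K * (\<Prod>j<m. (1 + t * d j) powi H j c)" for t
  proof -
    have "(\<Prod>j<m. (linform H n (x t) j / linform H n u j) powi H j c) =
        (\<Prod>j<m. (1 + t * d j) powi H j c)"
      by (rule prod.cong) (simp_all add: ratio_x)
    then show ?thesis
      using hmono_ratio[of m H n u "x t" c] a_nz unfolding a_def K_def by (simp add: mult_ac)
  qed
  have "\<forall>\<^sub>F t in at_left ts. lam c * hmono H m n (x t) c \<le> 1"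
  proof (rule eventually_mono[OF eventually_at_left_real[of 0 ts]])
    fix t assume t: "t \<in> {0<..<ts}"
    have "\<forall>j<m. linform H n (x t) j \<noteq> 0"
      using linform_x before[of _ t] a_nz t by (simp add: order_less_imp_not_eq2)
    moreover have "\<forall>i\<le>n. lam i * hmono H m n (x t) i > 0"
      using terms_pos_if_linform_ratios_pos[of m H n u lam "x t"] a_nz pos ratio_x before t
      unfolding a_def by simp
    ultimately show "lam c * hmono H m n (x t) c \<le> 1"
      using friendly_term_le_one[OF fr _ _ c(1)] by blast
  qed (use ts in simp)
  moreover have "filterlim (\<lambda>t. lam c * hmono H m n (x t) c) at_top (at_left ts)"
    unfolding term_c
  proof (rule filterlim_tendsto_pos_mult_at_top)
    show "0 < K" using pos c unfolding K_def by simp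
    show "filterlim (\<lambda>t. \<Prod>j<m. (1 + t * d j) powi H j c) at_top (at_left ts)"
      using j1 ts first c at by (intro prod_affine_powers_tendsto_at_top) auto
  qed simp
  then have "\<forall>\<^sub>F t in at_left ts. lam c * hmono H m n (x t) c > 1"
    by (simp add: filterlim_at_top_dense)
  ultimately have "\<forall>\<^sub>F t :: real in at_left ts. False" by eventually_elim simp
  then show False using trivial_limit_at_left_real by (simp add: eventually_False)
qed

lemma exists_positive_point_reversing_sign:
  assumes up: "\<forall>k\<le>n. u k > 0" and a: "linform H n u j \<noteq> 0"
    and p: "p \<le> n" "H j p > 0" and q: "q \<le> n" "H j q < 0"
  shows "\<exists>w. (\<forall>k\<le>n. w k > 0) \<and> linform H n u j * linform H n w j < 0"
proof -
  define a where "a = linform H n u j"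
  define g where "g = (if a > 0 then q else p)"
  have g: "g \<le> n" "a * real_of_int (H j g) < 0"
    using a p q unfolding g_def a_def by (auto simp: mult_pos_neg mult_neg_pos)
  define w where "w = (\<lambda>k. 1 * u k + (2 * \<bar>a\<bar>) * (if k = g then 1 else 0))"
  have lw: "linform H n w j = a + 2 * \<bar>a\<bar> * real_of_int (H j g)"
    unfolding w_def linform_linear_combination linform_unit_vector[OF g(1)] a_def by simp
  have "H j g \<noteq> 0" using g(2) by auto
  then have "1 \<le> \<bar>H j g\<bar>" by linarith
  then have "1 \<le> \<bar>real_of_int (H j g)\<bar>" by (simp flip: of_int_abs)
  then have "\<bar>a\<bar> * 1 \<le> \<bar>a\<bar> * \<bar>real_of_int (H j g)\<bar>" by (intro mult_left_mono) auto
  then have "a * real_of_int (H j g) \<le> - \<bar>a\<bar>"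
    using g(2) by (simp add: abs_mult)
  have "a * linform H n w j = a * a + 2 * \<bar>a\<bar> * (a * real_of_int (H j g))"
    unfolding lw by (simp add: algebra_simps)
  also have "\<dots> \<le> a * a + 2 * \<bar>a\<bar> * (- \<bar>a\<bar>)"
    using \<open>a * real_of_int (H j g) \<le> - \<bar>a\<bar>\<close> by (intro add_left_mono mult_left_mono) auto
  also have "\<dots> = - (a * a)" by (simp add: mult.assoc)
  also have "\<dots> < 0" using a unfolding a_def by (simp add: less_le)
  finally have "a * linform H n w j < 0" .
  moreover have "\<forall>k\<le>n. w k > 0" using up unfolding w_def by (simp add: add_pos_nonneg)
  ultimately show ?thesis unfolding a_def by blast
qed

text \<open>Perturbing along the moment curve \<open>s \<mapsto> (s, s\<^sup>2, \<dots>, s\<^sup>n\<^sup>+\<^sup>1)\<close> turns each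
  failure of genericity into a root of a nonzero polynomial in \<open>s\<close>: its coefficients are the
  \<open>2 \<times> 2\<close> minors of two rows of \<open>H\<close> against \<open>Hu\<close>, which cannot all vanish because the rows are
  not proportional.\<close>
lemma finite_nongeneric_moment_parameters:
  assumes nd: "rows_nondegenerate H m n" and a_nz: "\<forall>j<m. linform H n u j \<noteq> 0"
  shows "finite {s. \<not> segment_generic H m n u (\<lambda>k. w0 k + s * s ^ k)}"
proof -
  define a where "a j = linform H n u j" for j
  define ws where "ws s = (\<lambda>k. w0 k + s * s ^ k)" for s :: real
  define c where "c j k i = a j * real_of_int (H k i) - a k * real_of_int (H j i)" for j k i
  define P where "P j k = pCons (a j * linform H n w0 k - a k * linform H n w0 j)
       (\<Sum>i\<le>n. monom (c j k i) i)" for j k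
  have "linform H n (ws s) j = linform H n w0 j + s * (\<Sum>k\<le>n. real_of_int (H j k) * s ^ k)"
    for s j unfolding linform_def ws_def by (simp add: algebra_simps sum.distrib sum_distrib_left)
  then have poly_P: "poly (P j k) s = a j * linform H n (ws s) k - a k * linform H n (ws s) j"
    for j k s unfolding P_def c_def
    by (simp add: poly_sum poly_monom algebra_simps sum_distrib_left sum_subtractf sum.distrib)
  have "P j k \<noteq> 0" if "j < m" "k < m" "j \<noteq> k" for j k
  proof -
    have "\<exists>i\<le>n. c j k i \<noteq> 0"
    proof (rule ccontr)
      assume "\<not> (\<exists>i\<le>n. c j k i \<noteq> 0)"
      then have "\<forall>i\<le>n. real_of_int (H k i) = (a k / a j) * real_of_int (H j i)"
        using a_nz \<open>j < m\<close> unfolding c_def a_def by (auto simp: field_simps)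
      then show False using nd that unfolding rows_nondegenerate_def by blast
    qed
    then obtain i where "i \<le> n" "coeff (P j k) (Suc i) \<noteq> 0"
      unfolding P_def by (auto simp: coeff_sum)
    then show ?thesis by auto
  qed
  then have "finite (\<Union>(j, k)\<in>{..<m} \<times> {..<m} - Id. {s. poly (P j k) s = 0})"
    by (intro finite_UN_I) (auto intro!: poly_roots_finite)
  moreover have "{s. \<not> segment_generic H m n u (ws s)} \<subseteq>
      (\<Union>(j, k)\<in>{..<m} \<times> {..<m} - Id. {s. poly (P j k) s = 0})"
    unfolding segment_generic_def poly_P a_def by auto
  ultimately show ?thesis unfolding ws_def by (rule finite_subset[rotated])
qed

lemma exists_generic_point_reversing_sign:
  assumes nd: "rows_nondegenerate H m n" and a_nz: "\<forall>j<m. linform H n u j \<noteq> 0"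
    and w0: "\<forall>k\<le>n. w0 k > 0" and change: "linform H n u j0 * linform H n w0 j0 < 0"
  shows "\<exists>w. (\<forall>k\<le>n. w k > 0) \<and> linform H n u j0 * linform H n w j0 < 0
    \<and> segment_generic H m n u w"
proof -
  define ws where "ws s = (\<lambda>k. w0 k + s * s ^ k)" for s :: real
  have "((\<lambda>s. linform H n u j0 * linform H n (ws s) j0) \<longlongrightarrow>
      linform H n u j0 * linform H n w0 j0) (at_right 0)"
    unfolding ws_def linform_def by (auto intro!: tendsto_eq_intros)
  then have "\<forall>\<^sub>F s in at_right 0. linform H n u j0 * linform H n (ws s) j0 < 0"
    using change by (rule order_tendstoD(2))
  then obtain b where b: "b > 0"
    and sign: "\<And>s. 0 < s \<Longrightarrow> s < b \<Longrightarrow> linform H n u j0 * linform H n (ws s) j0 < 0"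
    unfolding eventually_at_right_field by blast
  have "infinite ({0<..<b} - {s. \<not> segment_generic H m n u (ws s)})"
    using infinite_Ioo[OF b] finite_nongeneric_moment_parameters[OF nd a_nz]
    unfolding ws_def by (metis Diff_infinite_finite)
  then obtain s where "s \<in> {0<..<b} - {s. \<not> segment_generic H m n u (ws s)}"
    using infinite_imp_nonempty by blast
  then have "0 < s" "s < b" "segment_generic H m n u (ws s)" by auto
  moreover have "\<forall>k\<le>n. ws s k > 0" using w0 \<open>0 < s\<close> unfolding ws_def by (simp add: add_pos_pos)
  ultimately show ?thesis using sign by blast
qed

lemma row_signs_constant_if_terms_pos:
  assumes fr: "friendly_pair H m n lam" and nd: "rows_nondegenerate H m n"
    and up: "\<forall>k\<le>n. u k > 0" and pos: "\<forall>i\<le>n. lam i * hmono H m n u i > 0"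
  shows "\<forall>j<m. (\<forall>k\<le>n. H j k \<ge> 0) \<or> (\<forall>k\<le>n. H j k \<le> 0)"
proof (intro allI impI, rule ccontr)
  fix j0 assume j0: "j0 < m" and "\<not> ((\<forall>k\<le>n. H j0 k \<ge> 0) \<or> (\<forall>k\<le>n. H j0 k \<le> 0))"
  then obtain p q where p: "p \<le> n" "H j0 p > 0" and q: "q \<le> n" "H j0 q < 0"
    by (meson not_le)
  have a_nz: "\<forall>j<m. linform H n u j \<noteq> 0" using linform_nonzero_if_terms_pos[OF nd pos] by blast
  obtain w0 where "\<forall>k\<le>n. w0 k > 0" "linform H n u j0 * linform H n w0 j0 < 0"
    using exists_positive_point_reversing_sign[of n u H j0 p q] up p q a_nz j0 by blast
  then obtain w where "\<forall>k\<le>n. w k > 0" "linform H n u j0 * linform H n w j0 < 0"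
      "segment_generic H m n u w"
    using exists_generic_point_reversing_sign[OF nd a_nz] by blast
  then show False using no_sign_change_towards_generic_point[OF fr nd up pos] j0 by blast
qed

lemma linform_ratio_pos_if_row_signs_constant:
  assumes nd: "rows_nondegenerate H m n"
    and rows: "\<forall>j<m. (\<forall>k\<le>n. H j k \<ge> 0) \<or> (\<forall>k\<le>n. H j k \<le> 0)"
    and up: "\<forall>k\<le>n. u k > 0" and vp: "\<forall>k\<le>n. v k > 0" and j: "j < m"
  shows "linform H n v j / linform H n u j > 0"
proof -
  have nz: "\<exists>k\<le>n. H j k \<noteq> 0" using nd j unfolding rows_nondegenerate_def by blast
  show ?thesis
  proof (cases "\<forall>k\<le>n. H j k \<ge> 0")
    case True
    then show ?thesis using linform_pos_if_row_nonneg[of n H j] nz up vp by simp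
  next
    case False
    then have "\<forall>k\<le>n. H j k \<le> 0" using rows j by blast
    then show ?thesis using linform_neg_if_row_nonpos[of n H j] nz up vp by (simp add: divide_neg_neg)
  qed
qed

lemma horn_pair_if_terms_pos:
  assumes fr: "friendly_pair H m n lam" and nd: "rows_nondegenerate H m n"
    and up: "\<forall>k\<le>n. u k > 0" and pos: "\<forall>i\<le>n. lam i * hmono H m n u i > 0"
  shows "horn_pair H m n lam"
proof -
  have ratio: "\<forall>j<m. linform H n v j / linform H n u j > 0" if "\<forall>k\<le>n. v k > 0" for v
    using linform_ratio_pos_if_row_signs_constant[OF nd row_signs_constant_if_terms_pos[OF assms]
        up that] by blast
  have a_nz: "\<forall>j<m. linform H n u j \<noteq> 0" using linform_nonzero_if_terms_pos[OF nd pos] by blast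
  show ?thesis unfolding horn_pair_def
  proof (intro conjI fr nd allI impI)
    fix v :: "nat \<Rightarrow> real" and i j
    assume "\<forall>k\<le>n. v k > 0" "j < m"
    then show "linform H n v j \<noteq> 0" using ratio by fastforce
  next
    fix v :: "nat \<Rightarrow> real" and i
    assume "\<forall>k\<le>n. v k > 0" "i \<le> n"
    then show "lam i * hmono H m n v i > 0"
      using terms_pos_if_linform_ratios_pos[OF a_nz pos ratio] by blast
  qed
qed

theorem corollary4p3:
  fixes H :: "nat \<Rightarrow> nat \<Rightarrow> int" and m n :: nat
    and lam u :: "nat \<Rightarrow> real"
  assumes "friendly_pair H m n lam"
    and "rows_nondegenerate H m n"
    and "\<forall>k\<le>n. u k > 0"
  shows "(horn_pair H m n lam \<longleftrightarrow> (\<forall>i\<le>n. lam i * hmono H m n u i > 0))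
    \<and> (horn_pair H m n lam \<longrightarrow>
         (\<forall>j<m. (\<forall>k\<le>n. H j k \<ge> 0) \<or> (\<forall>k\<le>n. H j k \<le> 0))
       \<and> (\<forall>v. (\<forall>k\<le>n. v k > 0) \<longrightarrow>
            (\<forall>j<m. sgn (linform H n v j) = sgn (linform H n u j))))"
proof -
  note fr = assms(1) and nd = assms(2) and up = assms(3)
  have iff: "horn_pair H m n lam \<longleftrightarrow> (\<forall>i\<le>n. lam i * hmono H m n u i > 0)"
  proof
    assume "horn_pair H m n lam"
    then have "\<forall>v. (\<forall>k\<le>n. v k > 0) \<longrightarrow> (\<forall>i\<le>n. lam i * hmono H m n v i > 0)"
      unfolding horn_pair_def by blast
    then show "\<forall>i\<le>n. lam i * hmono H m n u i > 0" using up by blast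
  qed (rule horn_pair_if_terms_pos[OF fr nd up])
  have rows: "\<forall>j<m. (\<forall>k\<le>n. H j k \<ge> 0) \<or> (\<forall>k\<le>n. H j k \<le> 0)"
    if "horn_pair H m n lam"
    using row_signs_constant_if_terms_pos[OF fr nd up iff[THEN iffD1, OF that]] .
  have "sgn (linform H n v j) = sgn (linform H n u j)"
    if "horn_pair H m n lam" "\<forall>k\<le>n. v k > 0" "j < m" for v j
    using linform_ratio_pos_if_row_signs_constant[OF nd rows[OF that(1)] up that(2,3)]
    by (auto simp: sgn_if zero_less_divide_iff)
  then show ?thesis using iff rows by blast
qed

end
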